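(* Let $f:\mathbb R^d\to\mathbb R$ be convex with a unique minimizer $x^*$. Let $(t_n)_{n\ge1}$ be positive numbers with $\sum_{n\ge1}t_n=\infty$, and let $(x_n)_{n\ge1}$ be a sequence in $\mathbb R^d$ such that $\|x_n-x^*\|\to z$ for some $z\ge0$ and $\sum_{n\ge1}t_n(f(x_n)-f(x^* ))<\infty$. Then $z=0$. *)

theory Defs
  imports "HOL-Analysis.Analysis"
begin

end

theory Submission
  imports Defs
begin

text \<open>Away from the minimiser a convex function with a unique minimiser exceeds its minimum by a
  fixed margin \<open>m > 0\<close>: on a sphere around \<open>x\<^sup>*\<close> the continuous \<open>f\<close> attains a minimum
  strictly above \<open>f x\<^sup>*\<close>, and by convexity every point outside the sphere is at least as bad as the
  point where the segment to \<open>x\<^sup>*\<close> crosses it. If \<open>z > 0\<close>, then eventually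
  \<open>t\<^sub>n \<le> t\<^sub>n (f x\<^sub>n - f x\<^sup>*) / m\<close>, so \<open>\<Sum> t\<^sub>n\<close> would converge.\<close>

lemma convex_on_exists_sphere_le:
  fixes f :: "'a::real_normed_vector \<Rightarrow> real"
  assumes conv: "convex_on UNIV f" and le: "f c \<le> f y"
    and r: "0 < r" "r \<le> norm (y - c)"
  shows "\<exists>v\<in>sphere c r. f v \<le> f y"
proof -
  define l where "l = r / norm (y - c)"
  have l: "0 < l" "l \<le> 1"
    using r by (auto simp: l_def divide_le_eq_1 intro!: divide_pos_pos)
  define v where "v = (1 - l) *\<^sub>R c + l *\<^sub>R y"
  have "v - c = l *\<^sub>R (y - c)"
    by (simp add: v_def algebra_simps)
  then have "norm (v - c) = l * norm (y - c)"
    using l by simp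
  also have "\<dots> = r"
    using r by (auto simp: l_def)
  finally have "v \<in> sphere c r"
    by (simp add: dist_norm norm_minus_commute)
  moreover have "f v \<le> (1 - l) * f c + l * f y"
    unfolding v_def using convex_onD[OF conv] l by simp
  moreover have "(1 - l) * f c + l * f y \<le> f y"
    using l mult_left_mono[OF le, of "1 - l"] by (simp add: algebra_simps)
  ultimately show ?thesis
    by (meson order_trans)
qed

lemma convex_on_unique_minimizer_margin:
  fixes f :: "'a::euclidean_space \<Rightarrow> real"
  assumes conv: "convex_on UNIV f"
    and min: "\<forall>y. f c \<le> f y"
    and uniq: "\<forall>w. (\<forall>y. f w \<le> f y) \<longrightarrow> w = c"
    and "0 < r"
  shows "\<exists>m>0. \<forall>y. r \<le> norm (y - c) \<longrightarrow> f c + m \<le> f y"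
proof -
  have "continuous_on (sphere c r) f"
    using convex_on_continuous[OF open_UNIV conv] continuous_on_subset by blast
  then obtain w where w: "w \<in> sphere c r" and w_min: "\<forall>v\<in>sphere c r. f w \<le> f v"
    using continuous_attains_inf[of "sphere c r" f] \<open>0 < r\<close> by auto
  have "w \<noteq> c"
    using w \<open>0 < r\<close> by auto
  then have "f c < f w"
    using min uniq order.antisym by (metis order.not_eq_order_implies_strict)
  moreover have "f w \<le> f y" if far: "r \<le> norm (y - c)" for y
  proof -
    obtain v where "v \<in> sphere c r" "f v \<le> f y"
      using convex_on_exists_sphere_le[OF conv _ \<open>0 < r\<close> far] min by blast
    with w_min show ?thesis
      by (meson order_trans)
  qed
  ultimately show ?thesis
    by (intro exI[of _ "f w - f c"]) auto
qed

lemma summable_if_weighted_summable_eventually_ge: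
  fixes t g :: "nat \<Rightarrow> real"
  assumes "summable (\<lambda>n. t n * g n)" and "\<forall>n. 0 \<le> t n"
    and "0 < m" and "eventually (\<lambda>n. m \<le> g n) sequentially"
  shows "summable t"
proof (rule summable_comparison_test_ev)
  show "eventually (\<lambda>n. norm (t n) \<le> t n * g n / m) sequentially"
    using assms(4)
  proof (rule eventually_mono)
    fix n assume "m \<le> g n"
    then show "norm (t n) \<le> t n * g n / m"
      using assms(2,3) by (simp add: field_simps mult_right_mono)
  qed
  show "summable (\<lambda>n. t n * g n / m)"
    using assms(1) by (rule summable_divide)
qed

theorem lemma2:
  fixes f :: "'a::euclidean_space \<Rightarrow> real"
    and xstar :: 'a and t :: "nat \<Rightarrow> real" and x :: "nat \<Rightarrow> 'a" and z :: real
  assumes conv: "convex_on UNIV f"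
    and min: "\<forall>y. f xstar \<le> f y"
    and uniq: "\<forall>w. (\<forall>y. f w \<le> f y) \<longrightarrow> w = xstar"
    and tpos: "\<forall>n. t n > 0"
    and tdiv: "\<not> summable t"
    and zpos: "z \<ge> 0"
    and lim: "(\<lambda>n. norm (x n - xstar)) \<longlonglongrightarrow> z"
    and sumf: "summable (\<lambda>n. t n * (f (x n) - f xstar))"
  shows "z = 0"
proof (rule ccontr)
  assume "z \<noteq> 0"
  with zpos have "0 < z / 2" "z / 2 < z"
    by auto
  obtain m where "0 < m" and margin: "\<forall>y. z / 2 \<le> norm (y - xstar) \<longrightarrow> f xstar + m \<le> f y"
    using convex_on_unique_minimizer_margin[OF conv min uniq \<open>0 < z / 2\<close>] by blast
  have "eventually (\<lambda>n. z / 2 \<le> norm (x n - xstar)) sequentially"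
    using order_tendstoD(1)[OF lim \<open>z / 2 < z\<close>] by (auto elim: eventually_mono)
  then have "eventually (\<lambda>n. m \<le> f (x n) - f xstar) sequentially"
    by (rule eventually_mono) (use margin in force)
  then have "summable t"
    using summable_if_weighted_summable_eventually_ge[OF sumf _ \<open>0 < m\<close>] tpos less_imp_le
    by blast
  with tdiv show False ..
qed

end
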